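(* Let $R$ be a profile of lexicographic preferences and $P=\mathrm{MPS}(R)$. For every type $i$, the type-$i$ marginal assignment $P^i$, defined by $P^i_{j,o}=\sum_{x\in\mathcal D:\,x_i=o}p_{j,x}$ for $j\in N$, $o\in D_i$, equals the output of the single-type probabilistic serial mechanism $\mathrm{PS}$ applied to the items $D_i$ and the profile $R^i=(\rhd^i_j)_{j\le n}$.
   Context: Setting: $N=\{1,\dots,n\}$ agents; $M=D_1\cup\dots\cup D_p$ items with pairwise disjoint types, $|D_i|=n$, unit supply; bundles $\mathcal D=D_1\times\dots\times D_p$, $x_i$ the type-$i$ component. Lexicographic preference: importance order $\rhd_j$ over types and strict orders $\rhd^i_j$ on each $D_i$; $x\succ_j y$ iff there is a type $i$ with $x_i\rhd^i_j y_i$ and $x_{i'}=y_{i'}$ for all $i'\rhd_j i$. MPS: items start with supply $1$; a bundle is available if all its items have positive remaining supply. Continuously in time each agent eats her $\succ_j$-most-preferred available bundle at rate $1$ (each item of it consumed at rate $1$, $p_{j,x}$ growing at rate $1$); exhausted items make all bundles containing them unavailable; run until all items are exhausted. Single-type PS on a set $D$ of $n$ items with strict orders $\rhd_j$ on $D$: items start with supply $1$; continuously in time each agent eats at rate $1$ her $\rhd_j$-most-preferred item with positive remaining supply, until time $1$; the output matrix records how much of each item each agent ate. *)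

theory Defs
  imports Complex_Main "HOL-Library.FuncSet"
begin

text \<open>
Agents are 0..n-1, types are 0..p-1, items have an arbitrary type 'a.  Strict orders are relations:
(a,b) in r means "a is strictly preferred to b" (a \<rhd> b).
imp j is agent j's importance order on types, ord j i is agent j's order on D i.
Both the MPS and PS eating processes are piecewise linear; they are formalised as
the standard phase algorithm: in each phase every agent eats her current top
available bundle/item, the phase lasts until the first item in consumption is
exhausted (for PS also capped at time 1), then the supplies and the eaten
amounts are updated.  Every nontrivial phase exhausts an item (or ends PS at time 1),
so finitely many iterations of the phase step give the final outcome.
\<close>

definition bundles :: "nat \<Rightarrow> (nat \<Rightarrow> 'a set) \<Rightarrow> (nat \<Rightarrow> 'a) set" where
  "bundles p D = PiE {..<p} D"

definition all_items :: "nat \<Rightarrow> (nat \<Rightarrow> 'a set) \<Rightarrow> 'a set" where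
  "all_items p D = (\<Union>i<p. D i)"

definition lex_pref :: "nat \<Rightarrow> nat rel \<Rightarrow> (nat \<Rightarrow> 'a rel) \<Rightarrow> (nat \<Rightarrow> 'a) \<Rightarrow> (nat \<Rightarrow> 'a) \<Rightarrow> bool" where
  "lex_pref p imp ord x y \<longleftrightarrow>
     (\<exists>i<p. (x i, y i) \<in> ord i \<and> (\<forall>i'<p. (i', i) \<in> imp \<longrightarrow> x i' = y i'))"

definition lex_setting ::
  "nat \<Rightarrow> nat \<Rightarrow> (nat \<Rightarrow> 'a set) \<Rightarrow> (nat \<Rightarrow> nat rel) \<Rightarrow> (nat \<Rightarrow> nat \<Rightarrow> 'a rel) \<Rightarrow> bool" where
  "lex_setting n p D imp ord \<longleftrightarrow>
     (\<forall>i<p. finite (D i) \<and> card (D i) = n) \<and>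
     (\<forall>i<p. \<forall>i'<p. i \<noteq> i' \<longrightarrow> D i \<inter> D i' = {}) \<and>
     (\<forall>j<n. strict_linear_order_on {..<p} (imp j) \<and> imp j \<subseteq> {..<p} \<times> {..<p} \<and>
        (\<forall>i<p. strict_linear_order_on (D i) (ord j i) \<and> ord j i \<subseteq> D i \<times> D i))"

definition mps_avail :: "nat \<Rightarrow> (nat \<Rightarrow> 'a set) \<Rightarrow> ('a \<Rightarrow> real) \<Rightarrow> (nat \<Rightarrow> 'a) set" where
  "mps_avail p D s = {x \<in> bundles p D. \<forall>i<p. s (x i) > 0}"

definition mps_top ::
  "nat \<Rightarrow> (nat \<Rightarrow> 'a set) \<Rightarrow> (nat \<Rightarrow> nat rel) \<Rightarrow> (nat \<Rightarrow> nat \<Rightarrow> 'a rel) \<Rightarrow> ('a \<Rightarrow> real) \<Rightarrow> nat \<Rightarrow> (nat \<Rightarrow> 'a)" where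
  "mps_top p D imp ord s j =
     (THE x. x \<in> mps_avail p D s \<and>
        (\<forall>y\<in>mps_avail p D s. y \<noteq> x \<longrightarrow> lex_pref p (imp j) (ord j) x y))"

definition mps_rate ::
  "nat \<Rightarrow> nat \<Rightarrow> (nat \<Rightarrow> 'a set) \<Rightarrow> (nat \<Rightarrow> nat rel) \<Rightarrow> (nat \<Rightarrow> nat \<Rightarrow> 'a rel) \<Rightarrow> ('a \<Rightarrow> real) \<Rightarrow> 'a \<Rightarrow> real" where
  "mps_rate n p D imp ord s b = real (card {j. j < n \<and> (\<exists>i<p. mps_top p D imp ord s j i = b)})"

definition mps_delta ::
  "nat \<Rightarrow> nat \<Rightarrow> (nat \<Rightarrow> 'a set) \<Rightarrow> (nat \<Rightarrow> nat rel) \<Rightarrow> (nat \<Rightarrow> nat \<Rightarrow> 'a rel) \<Rightarrow> ('a \<Rightarrow> real) \<Rightarrow> real" where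
  "mps_delta n p D imp ord s =
     Min {s b / mps_rate n p D imp ord s b | b. b \<in> all_items p D \<and> mps_rate n p D imp ord s b > 0}"

definition mps_step ::
  "nat \<Rightarrow> nat \<Rightarrow> (nat \<Rightarrow> 'a set) \<Rightarrow> (nat \<Rightarrow> nat rel) \<Rightarrow> (nat \<Rightarrow> nat \<Rightarrow> 'a rel)
   \<Rightarrow> ('a \<Rightarrow> real) \<times> (nat \<Rightarrow> (nat \<Rightarrow> 'a) \<Rightarrow> real) \<Rightarrow> ('a \<Rightarrow> real) \<times> (nat \<Rightarrow> (nat \<Rightarrow> 'a) \<Rightarrow> real)" where
  "mps_step n p D imp ord st =
     (let s = fst st; P = snd st in
      if mps_avail p D s = {} then st
      else (let d = mps_delta n p D imp ord s in
            ((\<lambda>b. s b - d * mps_rate n p D imp ord s b),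
             (\<lambda>j x. P j x + (if j < n \<and> x = mps_top p D imp ord s j then d else 0)))))"

text \<open>MPS(R): p j x is the amount of bundle x eaten by agent j.\<close>
definition MPS ::
  "nat \<Rightarrow> nat \<Rightarrow> (nat \<Rightarrow> 'a set) \<Rightarrow> (nat \<Rightarrow> nat rel) \<Rightarrow> (nat \<Rightarrow> nat \<Rightarrow> 'a rel) \<Rightarrow> nat \<Rightarrow> (nat \<Rightarrow> 'a) \<Rightarrow> real" where
  "MPS n p D imp ord =
     snd ((mps_step n p D imp ord ^^ card (all_items p D)) (\<lambda>_. 1, \<lambda>_ _. 0))"

definition marginal ::
  "nat \<Rightarrow> (nat \<Rightarrow> 'a set) \<Rightarrow> (nat \<Rightarrow> (nat \<Rightarrow> 'a) \<Rightarrow> real) \<Rightarrow> nat \<Rightarrow> nat \<Rightarrow> 'a \<Rightarrow> real" where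
  "marginal p D P i j b = (\<Sum>x\<in>{x \<in> bundles p D. x i = b}. P j x)"

definition ps_avail :: "'a set \<Rightarrow> ('a \<Rightarrow> real) \<Rightarrow> 'a set" where
  "ps_avail D s = {b \<in> D. s b > 0}"

definition ps_top :: "'a set \<Rightarrow> (nat \<Rightarrow> 'a rel) \<Rightarrow> ('a \<Rightarrow> real) \<Rightarrow> nat \<Rightarrow> 'a" where
  "ps_top D r s j =
     (THE b. b \<in> ps_avail D s \<and> (\<forall>b'\<in>ps_avail D s. b' \<noteq> b \<longrightarrow> (b, b') \<in> r j))"

definition ps_rate :: "nat \<Rightarrow> 'a set \<Rightarrow> (nat \<Rightarrow> 'a rel) \<Rightarrow> ('a \<Rightarrow> real) \<Rightarrow> 'a \<Rightarrow> real" where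
  "ps_rate n D r s b = real (card {j. j < n \<and> ps_top D r s j = b})"

text \<open>state: (current time, remaining supplies, eaten amounts); phases are capped at time 1\<close>
definition ps_step ::
  "nat \<Rightarrow> 'a set \<Rightarrow> (nat \<Rightarrow> 'a rel)
   \<Rightarrow> real \<times> ('a \<Rightarrow> real) \<times> (nat \<Rightarrow> 'a \<Rightarrow> real) \<Rightarrow> real \<times> ('a \<Rightarrow> real) \<times> (nat \<Rightarrow> 'a \<Rightarrow> real)" where
  "ps_step n D r st =
     (case st of (t, s, Q) \<Rightarrow>
      if ps_avail D s = {} \<or> t \<ge> 1 then st
      else (let d = min (1 - t) (Min {s b / ps_rate n D r s b | b. b \<in> D \<and> ps_rate n D r s b > 0}) in
            (t + d,
             (\<lambda>b. s b - d * ps_rate n D r s b),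
             (\<lambda>j b. Q j b + (if j < n \<and> b = ps_top D r s j then d else 0)))))"

text \<open>PS(D, r): Q j b is the amount of item b eaten by agent j.\<close>
definition PS :: "nat \<Rightarrow> 'a set \<Rightarrow> (nat \<Rightarrow> 'a rel) \<Rightarrow> nat \<Rightarrow> 'a \<Rightarrow> real" where
  "PS n D r = snd (snd ((ps_step n D r ^^ (card D + 1)) (0, \<lambda>_. 1, \<lambda>_ _. 0)))"

end

theory Submission
  imports Defs
begin

text \<open>Available bundles form the product of the sets of available items of the types, and
  the lexicographic optimum over such a product is taken componentwise: every agent's top
  available bundle consists of her top available item of each type. Hence each item of type
  \<open>i\<close> is eaten under MPS at exactly the rate at which single-type PS on \<open>D i\<close> eats it, and
  summing over the bundles through a given item turns MPS consumption into PS consumption.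
  An MPS phase ends as soon as any item runs out, so MPS phases refine the PS phases of every
  type, and after each MPS phase the type-\<open>i\<close> marginal state lies on the PS trajectory for
  \<open>D i\<close>. Every type carries \<open>n\<close> units eaten at total rate \<open>n\<close>, so all types run out
  exactly at time \<open>1\<close>, when MPS stops and PS has reached its final state.\<close>

type_synonym 'a ps_state = "real \<times> ('a \<Rightarrow> real) \<times> (nat \<Rightarrow> 'a \<Rightarrow> real)"
type_synonym 'a mps_state = "('a \<Rightarrow> real) \<times> (nat \<Rightarrow> (nat \<Rightarrow> 'a) \<Rightarrow> real)"

lemma strict_linear_order_on_finite_has_top:
  assumes "strict_linear_order_on X R" "finite A" "A \<noteq> {}" "A \<subseteq> X"
  shows "\<exists>b\<in>A. \<forall>b'\<in>A. b' \<noteq> b \<longrightarrow> (b, b') \<in> R"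
  using assms(2-4)
proof (induction A rule: finite_ne_induct)
  case (insert x F)
  then obtain b where b: "b \<in> F" "\<forall>b'\<in>F. b' \<noteq> b \<longrightarrow> (b, b') \<in> R" by auto
  have "trans R" "total_on X R" using assms(1) by (auto simp: strict_linear_order_on_def)
  show ?case
  proof (cases "(x, b) \<in> R")
    case True
    then show ?thesis using b \<open>trans R\<close> by (auto dest: transD)
  next
    case False
    then have "(b, x) \<in> R"
      using \<open>total_on X R\<close> b insert.hyps insert.prems by (auto simp: total_on_def)
    then show ?thesis using b by auto
  qed
qed auto

lemma strict_linear_order_on_finite_ex1_top:
  assumes "strict_linear_order_on X R" "finite A" "A \<noteq> {}" "A \<subseteq> X"
  shows "\<exists>!b. b \<in> A \<and> (\<forall>b'\<in>A. b' \<noteq> b \<longrightarrow> (b, b') \<in> R)"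
proof -
  have "asym R"
    using assms(1) asym_on_iff_irrefl_on_if_trans_on by (auto simp: strict_linear_order_on_def)
  then show ?thesis
    using strict_linear_order_on_finite_has_top[OF assms] by (metis asymD)
qed

lemma funpow_fixpoints_eq:
  assumes "f ((f ^^ a) x) = (f ^^ a) x" "f ((f ^^ b) x) = (f ^^ b) x"
  shows "(f ^^ a) x = (f ^^ b) x"
proof -
  have stable: "(f ^^ (k + m)) x = (f ^^ k) x" if "f ((f ^^ k) x) = (f ^^ k) x" for k m
    using that by (induction m) auto
  show ?thesis
    using stable[OF assms(1), of "b - a"] stable[OF assms(2), of "a - b"]
    by (cases "a \<le> b") simp_all
qed

lemma funpow_card_fixpoint:
  assumes "finite A" and "\<And>x. g x \<subseteq> A" and "\<And>x. f x \<noteq> x \<Longrightarrow> g x \<subset> g (f x)"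
  shows "f ((f ^^ card A) x) = (f ^^ card A) x"
proof -
  have count: "f ((f ^^ k) x) = (f ^^ k) x \<or> k \<le> card (g ((f ^^ k) x))" for k
  proof (induction k)
    case (Suc k)
    show ?case
    proof (cases "f ((f ^^ k) x) = (f ^^ k) x")
      case False
      then have "card (g ((f ^^ k) x)) < card (g ((f ^^ Suc k) x))"
        using assms by (simp add: psubset_card_mono rev_finite_subset)
      then show ?thesis using Suc.IH False by simp
    qed simp
  qed simp
  show ?thesis
  proof (rule ccontr)
    let ?y = "(f ^^ card A) x"
    assume "f ?y \<noteq> ?y"
    then have "card A \<le> card (g ?y)" using count by blast
    then have "g ?y = A" using assms(1,2) by (meson card_seteq)
    then show False using assms(2,3) \<open>f ?y \<noteq> ?y\<close> by blast
  qed
qed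

lemma Min_ratio_image:
  "{s b / \<rho> b | b. b \<in> A \<and> 0 < \<rho> b} = (\<lambda>b. s b / \<rho> b) ` {b \<in> A. 0 < \<rho> b}"
  by blast

lemma Min_ratio_mult_le:
  fixes s \<rho> :: "'a \<Rightarrow> real"
  assumes "finite A" "b \<in> A" "0 < \<rho> b"
  shows "Min {s b / \<rho> b | b. b \<in> A \<and> 0 < \<rho> b} * \<rho> b \<le> s b"
proof -
  have "Min {s b / \<rho> b | b. b \<in> A \<and> 0 < \<rho> b} \<le> s b / \<rho> b"
    using assms by (intro Min_le) (auto simp: Min_ratio_image)
  then show ?thesis using assms(3) by (simp add: pos_le_divide_eq)
qed

lemma Min_ratio_attained:
  fixes s \<rho> :: "'a \<Rightarrow> real"
  assumes "finite A" "b \<in> A" "0 < \<rho> b"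
  shows "\<exists>b\<in>A. 0 < \<rho> b \<and> s b = Min {s b / \<rho> b | b. b \<in> A \<and> 0 < \<rho> b} * \<rho> b"
proof -
  have "Min {s b / \<rho> b | b. b \<in> A \<and> 0 < \<rho> b} \<in> {s b / \<rho> b | b. b \<in> A \<and> 0 < \<rho> b}"
    using assms by (intro Min_in) (auto simp: Min_ratio_image)
  then show ?thesis by auto
qed

lemma Min_ratio_greatest:
  fixes s \<rho> :: "'a \<Rightarrow> real"
  assumes "finite A" "b \<in> A" "0 < \<rho> b" and "\<And>b. b \<in> A \<Longrightarrow> 0 < \<rho> b \<Longrightarrow> d * \<rho> b \<le> s b"
  shows "d \<le> Min {s b / \<rho> b | b. b \<in> A \<and> 0 < \<rho> b}"
  using assms by (subst Min_ge_iff) (auto simp: Min_ratio_image pos_le_divide_eq)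

section \<open>Single-type probabilistic serial\<close>

definition ps_advance :: "nat \<Rightarrow> 'a set \<Rightarrow> (nat \<Rightarrow> 'a rel) \<Rightarrow> real \<Rightarrow> 'a ps_state \<Rightarrow> 'a ps_state" where
  "ps_advance n E r d = (\<lambda>(t, s, Q).
     (t + d, \<lambda>b. s b - d * ps_rate n E r s b,
      \<lambda>j b. Q j b + (if j < n \<and> b = ps_top E r s j then d else 0)))"

definition ps_exhaustion_time :: "nat \<Rightarrow> 'a set \<Rightarrow> (nat \<Rightarrow> 'a rel) \<Rightarrow> ('a \<Rightarrow> real) \<Rightarrow> real" where
  "ps_exhaustion_time n E r s = Min {s b / ps_rate n E r s b | b. b \<in> E \<and> ps_rate n E r s b > 0}"

definition ps_phase :: "nat \<Rightarrow> 'a set \<Rightarrow> (nat \<Rightarrow> 'a rel) \<Rightarrow> 'a ps_state \<Rightarrow> real" where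
  "ps_phase n E r = (\<lambda>(t, s, Q).
     if ps_avail E s \<noteq> {} \<and> t < 1 then min (1 - t) (ps_exhaustion_time n E r s) else 0)"

definition ps_run :: "nat \<Rightarrow> 'a set \<Rightarrow> (nat \<Rightarrow> 'a rel) \<Rightarrow> nat \<Rightarrow> 'a ps_state" where
  "ps_run n E r k = (ps_step n E r ^^ k) (0, \<lambda>_. 1, \<lambda>_ _. 0)"

text \<open>The states the continuous PS eating process passes through, including those strictly
  inside a phase.\<close>
definition ps_on_path :: "nat \<Rightarrow> 'a set \<Rightarrow> (nat \<Rightarrow> 'a rel) \<Rightarrow> 'a ps_state \<Rightarrow> bool" where
  "ps_on_path n E r \<sigma> \<longleftrightarrow> (\<exists>k e. 0 \<le> e \<and> (0 < e \<longrightarrow> e < ps_phase n E r (ps_run n E r k)) \<and>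
      \<sigma> = ps_advance n E r e (ps_run n E r k))"

lemma ps_advance_simp:
  "ps_advance n E r d (t, s, Q) =
    (t + d, \<lambda>b. s b - d * ps_rate n E r s b,
     \<lambda>j b. Q j b + (if j < n \<and> b = ps_top E r s j then d else 0))"
  by (simp add: ps_advance_def)

lemma ps_phase_simp:
  "ps_phase n E r (t, s, Q) =
    (if ps_avail E s \<noteq> {} \<and> t < 1 then min (1 - t) (ps_exhaustion_time n E r s) else 0)"
  by (simp add: ps_phase_def)

lemma ps_advance_0 [simp]: "ps_advance n E r 0 \<sigma> = \<sigma>"
  by (cases \<sigma>) (simp add: ps_advance_simp)

lemma ps_step_eq_advance: "ps_step n E r \<sigma> = ps_advance n E r (ps_phase n E r \<sigma>) \<sigma>"
proof -
  obtain t s Q where \<sigma>: "\<sigma> = (t, s, Q)" by (cases \<sigma>)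
  show ?thesis
    unfolding \<sigma> ps_step_def ps_phase_simp ps_advance_simp ps_exhaustion_time_def by (simp add: Let_def)
qed

lemma ps_run_Suc: "ps_run n E r (Suc k) = ps_step n E r (ps_run n E r k)"
  by (simp add: ps_run_def)

lemma ps_on_path_init: "ps_on_path n E r (0, \<lambda>_. 1, \<lambda>_ _. 0)"
  unfolding ps_on_path_def by (intro exI[of _ 0]) (simp add: ps_run_def)

lemma ps_top_cong: "ps_avail E s = ps_avail E s' \<Longrightarrow> ps_top E r s = ps_top E r s'"
  unfolding ps_top_def by (simp only:)

lemma ps_rate_cong: "ps_avail E s = ps_avail E s' \<Longrightarrow> ps_rate n E r s = ps_rate n E r s'"
  unfolding ps_rate_def by (drule ps_top_cong[where r = r]) simp

locale ps_setting =
  fixes n :: nat and E :: "'a set" and r :: "nat \<Rightarrow> 'a rel"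
  assumes finite_items: "finite E" and agents_nonempty: "0 < n"
    and strict_linear_orders: "\<And>j. j < n \<Longrightarrow> strict_linear_order_on E (r j)"
begin

lemma ps_top_best:
  assumes "ps_avail E s \<noteq> {}" "j < n"
  shows "ps_top E r s j \<in> ps_avail E s \<and>
    (\<forall>b\<in>ps_avail E s. b \<noteq> ps_top E r s j \<longrightarrow> (ps_top E r s j, b) \<in> r j)"
proof -
  have "\<exists>!b. b \<in> ps_avail E s \<and> (\<forall>b'\<in>ps_avail E s. b' \<noteq> b \<longrightarrow> (b, b') \<in> r j)"
    by (rule strict_linear_order_on_finite_ex1_top[OF strict_linear_orders[OF assms(2)]])
      (use finite_items assms(1) in \<open>auto simp: ps_avail_def\<close>)
  then show ?thesis unfolding ps_top_def by (rule theI')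
qed

lemma ps_rate_pos_imp_avail:
  assumes "ps_avail E s \<noteq> {}" "0 < ps_rate n E r s b"
  shows "b \<in> ps_avail E s"
proof -
  obtain j where "j < n" "ps_top E r s j = b"
    using assms(2) by (auto simp: ps_rate_def card_gt_0_iff)
  then show ?thesis using ps_top_best[OF assms(1)] by blast
qed

lemma ps_rate_eq_0:
  assumes "ps_avail E s \<noteq> {}" "b \<notin> ps_avail E s"
  shows "ps_rate n E r s b = 0"
proof -
  have "\<not> 0 < ps_rate n E r s b" using assms ps_rate_pos_imp_avail by blast
  then show ?thesis by (simp add: ps_rate_def)
qed

lemma ps_rate_sum:
  assumes "ps_avail E s \<noteq> {}"
  shows "(\<Sum>b\<in>E. ps_rate n E r s b) = real n"
proof -
  have "(\<Sum>b\<in>E. sum (\<lambda>_. 1::real) {j \<in> {..<n}. ps_top E r s j = b}) = sum (\<lambda>_. 1) {..<n}"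
    by (rule sum.group) (use finite_items ps_top_best[OF assms] in \<open>auto simp: ps_avail_def\<close>)
  then show ?thesis by (simp add: ps_rate_def)
qed

lemma ps_ex_rate_pos:
  assumes "ps_avail E s \<noteq> {}"
  shows "\<exists>b\<in>E. 0 < ps_rate n E r s b"
proof (rule ccontr)
  assume "\<not> ?thesis"
  then have "(\<Sum>b\<in>E. ps_rate n E r s b) \<le> 0" by (meson not_less sum_nonpos)
  moreover have "0 < real n" using agents_nonempty by simp
  ultimately show False using ps_rate_sum[OF assms] by linarith
qed

lemma ps_exhaustion_time_mult_le:
  "b \<in> E \<Longrightarrow> 0 < ps_rate n E r s b \<Longrightarrow> ps_exhaustion_time n E r s * ps_rate n E r s b \<le> s b"
  unfolding ps_exhaustion_time_def using finite_items by (rule Min_ratio_mult_le)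

lemma ps_exhaustion_time_attained:
  "ps_avail E s \<noteq> {} \<Longrightarrow>
    \<exists>b\<in>E. 0 < ps_rate n E r s b \<and> s b = ps_exhaustion_time n E r s * ps_rate n E r s b"
  unfolding ps_exhaustion_time_def using ps_ex_rate_pos Min_ratio_attained[OF finite_items] by blast

lemma ps_exhaustion_time_pos:
  assumes "ps_avail E s \<noteq> {}"
  shows "0 < ps_exhaustion_time n E r s"
proof -
  obtain b where "0 < ps_rate n E r s b" "s b = ps_exhaustion_time n E r s * ps_rate n E r s b"
    using ps_exhaustion_time_attained[OF assms] by blast
  moreover have "0 < s b" using ps_rate_pos_imp_avail[OF assms \<open>0 < ps_rate n E r s b\<close>]
    by (simp add: ps_avail_def)
  ultimately show ?thesis by (metis zero_less_mult_pos2)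
qed

lemma ps_exhaustion_time_greatest:
  assumes "ps_avail E s \<noteq> {}" and "\<And>b. b \<in> E \<Longrightarrow> 0 < ps_rate n E r s b \<Longrightarrow> x * ps_rate n E r s b \<le> s b"
  shows "x \<le> ps_exhaustion_time n E r s"
  unfolding ps_exhaustion_time_def using ps_ex_rate_pos[OF assms(1)] assms(2)
  by (auto intro: Min_ratio_greatest[OF finite_items])

lemma ps_avail_advance:
  assumes "ps_avail E s \<noteq> {}" "d < ps_exhaustion_time n E r s"
  shows "ps_avail E (\<lambda>b. s b - d * ps_rate n E r s b) = ps_avail E s"
proof -
  have "0 < s b - d * ps_rate n E r s b \<longleftrightarrow> 0 < s b" if "b \<in> E" for b
  proof (cases "0 < ps_rate n E r s b")
    case True
    have "d * ps_rate n E r s b < ps_exhaustion_time n E r s * ps_rate n E r s b"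
      using True assms(2) by simp
    moreover have "0 < s b" using ps_rate_pos_imp_avail[OF assms(1) True] by (simp add: ps_avail_def)
    ultimately show ?thesis using ps_exhaustion_time_mult_le[OF that True] by linarith
  next
    case False
    then have "ps_rate n E r s b = 0" by (simp add: ps_rate_def)
    then show ?thesis by simp
  qed
  then show ?thesis unfolding ps_avail_def by auto
qed

lemma ps_advance_add:
  assumes "ps_avail E s \<noteq> {}" "d < ps_exhaustion_time n E r s"
  shows "ps_advance n E r d' (ps_advance n E r d (t, s, Q)) = ps_advance n E r (d + d') (t, s, Q)"
proof -
  have avail: "ps_avail E (\<lambda>b. s b - d * ps_rate n E r s b) = ps_avail E s"
    by (rule ps_avail_advance[OF assms])
  show ?thesis
    using ps_rate_cong[OF avail, of n r] ps_top_cong[OF avail, of r]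
    by (simp add: ps_advance_simp algebra_simps fun_eq_iff)
qed

lemma ps_on_path_advance_run:
  assumes "0 \<le> e" "e \<le> ps_phase n E r (ps_run n E r k)"
  shows "ps_on_path n E r (ps_advance n E r e (ps_run n E r k))"
proof (cases "e < ps_phase n E r (ps_run n E r k)")
  case True
  then show ?thesis
    unfolding ps_on_path_def using assms(1) by (intro exI[of _ k] exI[of _ e]) simp
next
  case False
  then have "ps_advance n E r e (ps_run n E r k) = ps_run n E r (Suc k)"
    using assms(2) by (simp add: ps_run_Suc ps_step_eq_advance)
  then show ?thesis unfolding ps_on_path_def by (intro exI[of _ "Suc k"] exI[of _ 0]) simp
qed

lemma ps_on_path_advance:
  assumes path: "ps_on_path n E r (t, s, Q)" and avail: "ps_avail E s \<noteq> {}"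
    and "0 \<le> d" "d \<le> 1 - t" and feasible: "\<And>b. b \<in> E \<Longrightarrow> d * ps_rate n E r s b \<le> s b"
  shows "ps_on_path n E r (ps_advance n E r d (t, s, Q))"
proof (cases "d = 0")
  case False
  then have "0 < d" using \<open>0 \<le> d\<close> by simp
  obtain k e where "0 \<le> e" and e: "0 < e \<longrightarrow> e < ps_phase n E r (ps_run n E r k)"
    and \<sigma>: "(t, s, Q) = ps_advance n E r e (ps_run n E r k)"
    using path unfolding ps_on_path_def by blast
  obtain t0 s0 Q0 where run: "ps_run n E r k = (t0, s0, Q0)" by (cases "ps_run n E r k")
  have t: "t = t0 + e" and s: "s = (\<lambda>b. s0 b - e * ps_rate n E r s0 b)"
    using \<sigma> by (auto simp: run ps_advance_simp)
  have "e < ps_phase n E r (t0, s0, Q0)"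
  proof (cases "e = 0")
    case True
    then show ?thesis using t s avail \<open>0 < d\<close> \<open>d \<le> 1 - t\<close> ps_exhaustion_time_pos[OF avail]
      by (simp add: ps_phase_simp)
  qed (use e run \<open>0 \<le> e\<close> in simp)
  then have active: "ps_avail E s0 \<noteq> {}" "t0 < 1" and within: "e < ps_exhaustion_time n E r s0"
    using \<open>0 \<le> e\<close> by (auto simp: ps_phase_simp split: if_splits)
  have "ps_avail E s = ps_avail E s0" unfolding s by (rule ps_avail_advance[OF active(1) within])
  then have rate: "ps_rate n E r s = ps_rate n E r s0" by (rule ps_rate_cong)
  have merged: "ps_advance n E r d (t, s, Q) = ps_advance n E r (e + d) (ps_run n E r k)"
    using \<sigma> ps_advance_add[OF active(1) within] by (simp add: run)
  have "e + d \<le> ps_exhaustion_time n E r s0"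
    by (rule ps_exhaustion_time_greatest[OF active(1)])
      (use feasible s rate in \<open>simp add: algebra_simps\<close>)
  then have "e + d \<le> ps_phase n E r (ps_run n E r k)"
    using active t \<open>d \<le> 1 - t\<close> by (simp add: run ps_phase_simp)
  then show ?thesis
    unfolding merged using \<open>0 \<le> e\<close> \<open>0 \<le> d\<close> by (intro ps_on_path_advance_run) simp_all
qed (use path in simp)

lemma ps_step_progress:
  assumes step: "ps_step n E r (t, s, Q) = (t', s', Q')" and moved: "(t', s', Q') \<noteq> (t, s, Q)"
  shows "t < 1" and "{b \<in> E. s b \<le> 0} \<subseteq> {b \<in> E. s' b \<le> 0}"
    and "1 \<le> t' \<or> (\<exists>b\<in>E. 0 < s b \<and> s' b \<le> 0)"
proof -
  have active: "ps_avail E s \<noteq> {}" "t < 1"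
    using step moved by (auto simp: ps_step_def split: if_splits)
  let ?d = "min (1 - t) (ps_exhaustion_time n E r s)"
  have new: "t' = t + ?d" "s' = (\<lambda>b. s b - ?d * ps_rate n E r s b)"
    using step active by (simp_all add: ps_step_eq_advance ps_phase_simp ps_advance_simp)
  show "t < 1" by (fact active(2))
  show "{b \<in> E. s b \<le> 0} \<subseteq> {b \<in> E. s' b \<le> 0}"
    using ps_rate_eq_0[OF active(1)] by (auto simp: new ps_avail_def)
  show "1 \<le> t' \<or> (\<exists>b\<in>E. 0 < s b \<and> s' b \<le> 0)"
  proof (cases "1 - t \<le> ps_exhaustion_time n E r s")
    case False
    obtain b where b: "b \<in> E" "0 < ps_rate n E r s b"
      "s b = ps_exhaustion_time n E r s * ps_rate n E r s b"
      using ps_exhaustion_time_attained[OF active(1)] by blast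
    then have "0 < s b" using ps_rate_pos_imp_avail[OF active(1) b(2)] unfolding ps_avail_def by blast
    then show ?thesis using False b by (intro disjI2 bexI[of _ b]) (simp_all add: new)
  qed (simp add: new)
qed

text \<open>Each moving phase exhausts a new item or brings the clock to \<open>1\<close> (recorded by the
  extra element \<open>None\<close>), so \<open>card E + 1\<close> phases reach a fixpoint.\<close>
lemma ps_run_fixpoint: "ps_step n E r (ps_run n E r (card E + 1)) = ps_run n E r (card E + 1)"
proof -
  define g :: "'a ps_state \<Rightarrow> 'a option set"
    where "g = (\<lambda>(t, s, Q). Some ` {b \<in> E. s b \<le> 0} \<union> (if 1 \<le> t then {None} else {}))"
  have card: "card (insert None (Some ` E)) = card E + 1"
    using finite_items by (simp add: card_image)
  have bounded: "g \<sigma> \<subseteq> insert None (Some ` E)" for \<sigma>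
    by (auto simp: g_def split: prod.splits)
  have growing: "g \<sigma> \<subset> g (ps_step n E r \<sigma>)" if "ps_step n E r \<sigma> \<noteq> \<sigma>" for \<sigma>
  proof -
    obtain t s Q t' s' Q' where \<sigma>: "\<sigma> = (t, s, Q)" and step: "ps_step n E r \<sigma> = (t', s', Q')"
      by (metis prod_cases3)
    have "(t', s', Q') \<noteq> (t, s, Q)" using that \<sigma> step by simp
    note progress = ps_step_progress[OF step[unfolded \<sigma>] this]
    have "g \<sigma> = Some ` {b \<in> E. s b \<le> 0}" using progress(1) by (simp add: g_def \<sigma>)
    moreover have "Some ` {b \<in> E. s b \<le> 0} \<subseteq> g (ps_step n E r \<sigma>)"
      using progress(2) by (auto simp: g_def step)
    moreover have "\<exists>z\<in>g (ps_step n E r \<sigma>). z \<notin> Some ` {b \<in> E. s b \<le> 0}"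
      using progress(3) by (auto simp: g_def step)
    ultimately show ?thesis by blast
  qed
  show ?thesis
    using funpow_card_fixpoint[where f = "ps_step n E r" and g = g, OF _ bounded growing] finite_items
    by (simp add: card ps_run_def)
qed

lemma PS_eq_if_on_path_at_1:
  assumes "ps_on_path n E r (1, s, Q)"
  shows "PS n E r = Q"
proof -
  obtain k e where "0 \<le> e" and e: "0 < e \<longrightarrow> e < ps_phase n E r (ps_run n E r k)"
    and \<sigma>: "(1, s, Q) = ps_advance n E r e (ps_run n E r k)"
    using assms unfolding ps_on_path_def by blast
  obtain t0 s0 Q0 where run: "ps_run n E r k = (t0, s0, Q0)" by (cases "ps_run n E r k")
  have "1 = t0 + e" using \<sigma> by (simp add: run ps_advance_simp)
  then have "e = 0"
    using e \<open>0 \<le> e\<close> by (auto simp: run ps_phase_simp split: if_splits)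
  then have "ps_run n E r k = (1, s, Q)" using \<sigma> by simp
  then have "ps_step n E r (ps_run n E r k) = ps_run n E r k" by (simp add: ps_step_def)
  then have "ps_run n E r (card E + 1) = ps_run n E r k"
    using funpow_fixpoints_eq ps_run_fixpoint unfolding ps_run_def by metis
  then show ?thesis using \<open>ps_run n E r k = (1, s, Q)\<close> by (simp add: PS_def ps_run_def)
qed

end

section \<open>Lexicographic preferences\<close>

lemma lex_pref_asym:
  assumes "total_on {..<p} imp" and "\<And>i. i < p \<Longrightarrow> asym (ord i)"
    and "lex_pref p imp ord x y"
  shows "\<not> lex_pref p imp ord y x"
proof
  assume "lex_pref p imp ord y x"
  then obtain k where k: "k < p" "(y k, x k) \<in> ord k" "\<forall>i'<p. (i', k) \<in> imp \<longrightarrow> y i' = x i'"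
    unfolding lex_pref_def by blast
  obtain i where i: "i < p" "(x i, y i) \<in> ord i" "\<forall>i'<p. (i', i) \<in> imp \<longrightarrow> x i' = y i'"
    using assms(3) unfolding lex_pref_def by blast
  have "i = k \<or> (i, k) \<in> imp \<or> (k, i) \<in> imp"
    using assms(1) i(1) k(1) by (auto simp: total_on_def)
  then show False
  proof (elim disjE)
    assume "i = k"
    then show False using i(2) k(2) assms(2)[OF i(1)] by (auto dest: asymD)
  next
    assume "(i, k) \<in> imp"
    then have "(x i, x i) \<in> ord i" using i k by auto
    then show False using assms(2)[OF i(1)] by (auto dest: asymD)
  next
    assume "(k, i) \<in> imp"
    then have "(y k, y k) \<in> ord k" using i k by auto
    then show False using assms(2)[OF k(1)] by (auto dest: asymD)
  qed
qed

lemma lex_pref_if_componentwise_pref: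
  assumes "strict_linear_order_on {..<p} imp"
    and "x \<in> extensional {..<p}" "y \<in> extensional {..<p}" "x \<noteq> y"
    and "\<And>i. i < p \<Longrightarrow> x i \<noteq> y i \<Longrightarrow> (x i, y i) \<in> ord i"
  shows "lex_pref p imp ord x y"
proof -
  let ?A = "{i. i < p \<and> x i \<noteq> y i}"
  have "?A \<noteq> {}"
  proof
    assume "?A = {}"
    then have "x = y" using assms(2,3) by (intro extensionalityI[of x "{..<p}"]) auto
    with assms(4) show False ..
  qed
  then obtain i where i: "i \<in> ?A" and top: "\<forall>i'\<in>?A. i' \<noteq> i \<longrightarrow> (i, i') \<in> imp"
    using strict_linear_order_on_finite_has_top[OF assms(1), of ?A] by auto
  have "trans imp" "irrefl imp" using assms(1) by (auto simp: strict_linear_order_on_def)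
  have "x i' = y i'" if "i' < p" "(i', i) \<in> imp" for i'
  proof (rule ccontr)
    assume "x i' \<noteq> y i'"
    moreover have "i' \<noteq> i" using that(2) \<open>irrefl imp\<close> by (auto simp: irrefl_def)
    ultimately have "(i, i') \<in> imp" using top that(1) by blast
    then show False using that(2) \<open>trans imp\<close> \<open>irrefl imp\<close> unfolding irrefl_def by (blast dest: transD)
  qed
  then show ?thesis using i assms(5) unfolding lex_pref_def by blast
qed


section \<open>Multi-type probabilistic serial\<close>

definition mps_run ::
  "nat \<Rightarrow> nat \<Rightarrow> (nat \<Rightarrow> 'a set) \<Rightarrow> (nat \<Rightarrow> nat rel) \<Rightarrow> (nat \<Rightarrow> nat \<Rightarrow> 'a rel) \<Rightarrow> nat
   \<Rightarrow> 'a mps_state" where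
  "mps_run n p D imp ord k = (mps_step n p D imp ord ^^ k) (\<lambda>_. 1, \<lambda>_ _. 0)"

locale mps_setting =
  fixes n p :: nat and D :: "nat \<Rightarrow> 'a set"
    and imp :: "nat \<Rightarrow> nat rel" and ord :: "nat \<Rightarrow> nat \<Rightarrow> 'a rel"
  assumes setting: "lex_setting n p D imp ord" and agents_nonempty: "0 < n" and types_nonempty: "0 < p"
begin

abbreviation type_profile :: "nat \<Rightarrow> nat \<Rightarrow> 'a rel" where
  "type_profile i \<equiv> \<lambda>j. ord j i"

lemma finite_type: "i < p \<Longrightarrow> finite (D i)"
  and card_type: "i < p \<Longrightarrow> card (D i) = n"
  and types_disjoint: "i < p \<Longrightarrow> i' < p \<Longrightarrow> i \<noteq> i' \<Longrightarrow> D i \<inter> D i' = {}"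
  and importance_order: "j < n \<Longrightarrow> strict_linear_order_on {..<p} (imp j)"
  and item_order: "j < n \<Longrightarrow> i < p \<Longrightarrow> strict_linear_order_on (D i) (ord j i)"
  using setting unfolding lex_setting_def by auto

lemma type_ps_setting: "i < p \<Longrightarrow> ps_setting n (D i) (type_profile i)"
  by unfold_locales (auto simp: finite_type agents_nonempty item_order)

lemma finite_all_items: "finite (all_items p D)"
  by (simp add: all_items_def finite_type)

lemma mps_avail_eq_PiE: "mps_avail p D s = PiE {..<p} (\<lambda>i. ps_avail (D i) s)"
  by (auto simp: mps_avail_def ps_avail_def bundles_def PiE_def Pi_def)

lemma mps_avail_nonempty_iff: "mps_avail p D s \<noteq> {} \<longleftrightarrow> (\<forall>i<p. ps_avail (D i) s \<noteq> {})"
  by (auto simp: mps_avail_eq_PiE PiE_eq_empty_iff)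

definition top_bundle :: "('a \<Rightarrow> real) \<Rightarrow> nat \<Rightarrow> nat \<Rightarrow> 'a" where
  "top_bundle s j = (\<lambda>i\<in>{..<p}. ps_top (D i) (type_profile i) s j)"

lemma type_top_best:
  assumes "mps_avail p D s \<noteq> {}" "i < p" "j < n"
  shows "ps_top (D i) (type_profile i) s j \<in> ps_avail (D i) s \<and>
    (\<forall>b\<in>ps_avail (D i) s. b \<noteq> ps_top (D i) (type_profile i) s j \<longrightarrow>
       (ps_top (D i) (type_profile i) s j, b) \<in> ord j i)"
proof -
  interpret ps_setting n "D i" "type_profile i" using assms(2) by (rule type_ps_setting)
  show ?thesis using ps_top_best[of s j] assms by (simp add: mps_avail_nonempty_iff)
qed

lemma top_bundle_avail:
  assumes "mps_avail p D s \<noteq> {}" "j < n"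
  shows "top_bundle s j \<in> mps_avail p D s"
  using type_top_best[OF assms(1) _ assms(2)] by (simp add: mps_avail_eq_PiE top_bundle_def)

lemma top_bundle_best:
  assumes "mps_avail p D s \<noteq> {}" "j < n" "y \<in> mps_avail p D s" "y \<noteq> top_bundle s j"
  shows "lex_pref p (imp j) (ord j) (top_bundle s j) y"
proof (rule lex_pref_if_componentwise_pref[OF importance_order[OF assms(2)]])
  show "top_bundle s j \<in> extensional {..<p}" by (simp add: top_bundle_def)
  show "y \<in> extensional {..<p}" using assms(3) by (simp add: mps_avail_eq_PiE PiE_def)
  fix i assume "i < p" "top_bundle s j i \<noteq> y i"
  moreover have "y i \<in> ps_avail (D i) s" using assms(3) \<open>i < p\<close> by (auto simp: mps_avail_eq_PiE)
  ultimately show "(top_bundle s j i, y i) \<in> ord j i"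
    using type_top_best[OF assms(1) \<open>i < p\<close> assms(2)] by (simp add: top_bundle_def)
qed (use assms(4) in simp)

lemma mps_top_eq_top_bundle:
  assumes "mps_avail p D s \<noteq> {}" "j < n"
  shows "mps_top p D imp ord s j = top_bundle s j"
  unfolding mps_top_def
proof (rule the_equality)
  fix x
  assume x: "x \<in> mps_avail p D s \<and> (\<forall>y\<in>mps_avail p D s. y \<noteq> x \<longrightarrow> lex_pref p (imp j) (ord j) x y)"
  show "x = top_bundle s j"
  proof (rule ccontr)
    assume "x \<noteq> top_bundle s j"
    then have "lex_pref p (imp j) (ord j) x (top_bundle s j)"
      and "lex_pref p (imp j) (ord j) (top_bundle s j) x"
      using x top_bundle_avail[OF assms] top_bundle_best[OF assms] by auto
    moreover have "total_on {..<p} (imp j)"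
      using importance_order[OF assms(2)] by (simp add: strict_linear_order_on_def)
    moreover have "asym (ord j i)" if "i < p" for i
      using item_order[OF assms(2) that] asym_on_iff_irrefl_on_if_trans_on
      by (auto simp: strict_linear_order_on_def)
    ultimately show False using lex_pref_asym by blast
  qed
qed (use top_bundle_avail[OF assms] top_bundle_best[OF assms] in blast)

lemma mps_rate_eq_ps_rate:
  assumes "mps_avail p D s \<noteq> {}" "i < p" "b \<in> D i"
  shows "mps_rate n p D imp ord s b = ps_rate n (D i) (type_profile i) s b"
proof -
  have "(\<exists>i'<p. mps_top p D imp ord s j i' = b) \<longleftrightarrow> ps_top (D i) (type_profile i) s j = b"
    if "j < n" for j
    unfolding mps_top_eq_top_bundle[OF assms(1) that]
  proof
    assume "\<exists>i'<p. top_bundle s j i' = b"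
    then obtain i' where "i' < p" "ps_top (D i') (type_profile i') s j = b"
      by (auto simp: top_bundle_def)
    moreover have "ps_top (D i') (type_profile i') s j \<in> D i'"
      using type_top_best[OF assms(1) \<open>i' < p\<close> that] by (simp add: ps_avail_def)
    ultimately have "i' = i" using types_disjoint[OF assms(2)] assms(3) by blast
    then show "ps_top (D i) (type_profile i) s j = b" using \<open>ps_top (D i') _ s j = b\<close> by simp
  qed (use assms(2) in \<open>auto simp: top_bundle_def\<close>)
  then have "{j. j < n \<and> (\<exists>i'<p. mps_top p D imp ord s j i' = b)} =
      {j. j < n \<and> ps_top (D i) (type_profile i) s j = b}"
    by blast
  then show ?thesis unfolding mps_rate_def ps_rate_def by simp
qed

lemma mps_rate_nonneg: "0 \<le> mps_rate n p D imp ord s b"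
  by (simp add: mps_rate_def)

lemma all_items_iff: "b \<in> all_items p D \<longleftrightarrow> (\<exists>i<p. b \<in> D i)"
  by (auto simp: all_items_def)

lemma mps_rate_pos_imp_pos:
  assumes "mps_avail p D s \<noteq> {}" "b \<in> all_items p D" "0 < mps_rate n p D imp ord s b"
  shows "0 < s b"
proof -
  obtain i where i: "i < p" "b \<in> D i" using assms(2) by (auto simp: all_items_iff)
  interpret ps_setting n "D i" "type_profile i" using i(1) by (rule type_ps_setting)
  show ?thesis
    using ps_rate_pos_imp_avail[of s b] assms i mps_rate_eq_ps_rate
    by (simp add: mps_avail_nonempty_iff ps_avail_def)
qed

lemma mps_ex_rate_pos:
  assumes "mps_avail p D s \<noteq> {}"
  shows "\<exists>b\<in>all_items p D. 0 < mps_rate n p D imp ord s b"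
proof -
  interpret ps_setting n "D 0" "type_profile 0" using types_nonempty by (rule type_ps_setting)
  obtain b where "b \<in> D 0" "0 < ps_rate n (D 0) (type_profile 0) s b"
    using ps_ex_rate_pos[of s] assms types_nonempty by (auto simp: mps_avail_nonempty_iff)
  then show ?thesis
    using mps_rate_eq_ps_rate[OF assms types_nonempty] types_nonempty
    by (intro bexI[of _ b]) (auto simp: all_items_iff)
qed

lemma mps_rate_sum:
  assumes "mps_avail p D s \<noteq> {}" "i < p"
  shows "(\<Sum>b\<in>D i. mps_rate n p D imp ord s b) = real n"
proof -
  interpret ps_setting n "D i" "type_profile i" using assms(2) by (rule type_ps_setting)
  show ?thesis
    using ps_rate_sum[of s] assms mps_rate_eq_ps_rate[OF assms] by (simp add: mps_avail_nonempty_iff)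
qed

lemma mps_delta_attained:
  assumes "mps_avail p D s \<noteq> {}"
  shows "\<exists>b\<in>all_items p D. 0 < mps_rate n p D imp ord s b \<and>
    s b = mps_delta n p D imp ord s * mps_rate n p D imp ord s b"
  unfolding mps_delta_def
  using mps_ex_rate_pos[OF assms] Min_ratio_attained[OF finite_all_items] by blast

lemma mps_delta_pos:
  assumes "mps_avail p D s \<noteq> {}"
  shows "0 < mps_delta n p D imp ord s"
proof -
  obtain b where "b \<in> all_items p D" "0 < mps_rate n p D imp ord s b"
    "s b = mps_delta n p D imp ord s * mps_rate n p D imp ord s b"
    using mps_delta_attained[OF assms] by blast
  moreover have "0 < s b" using mps_rate_pos_imp_pos[OF assms] calculation(1,2) .
  ultimately show ?thesis by (metis zero_less_mult_pos2)
qed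

lemma mps_delta_feasible:
  assumes "\<forall>b\<in>all_items p D. 0 \<le> s b" "b \<in> all_items p D"
  shows "mps_delta n p D imp ord s * mps_rate n p D imp ord s b \<le> s b"
proof (cases "0 < mps_rate n p D imp ord s b")
  case True
  then show ?thesis
    unfolding mps_delta_def by (rule Min_ratio_mult_le[OF finite_all_items assms(2)])
next
  case False
  then have "mps_rate n p D imp ord s b = 0" using mps_rate_nonneg by (simp add: less_le)
  then show ?thesis using assms by simp
qed

lemma mps_step_simp:
  assumes "mps_avail p D s \<noteq> {}"
  shows "mps_step n p D imp ord (s, P) =
    (\<lambda>b. s b - mps_delta n p D imp ord s * mps_rate n p D imp ord s b,
     \<lambda>j x. P j x + (if j < n \<and> x = top_bundle s j then mps_delta n p D imp ord s else 0))"
  using assms mps_top_eq_top_bundle[OF assms] by (auto simp: mps_step_def Let_def fun_eq_iff)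

lemma mps_step_exhausts:
  assumes "mps_avail p D s \<noteq> {}"
  shows "{b \<in> all_items p D. s b \<le> 0} \<subset> {b \<in> all_items p D. fst (mps_step n p D imp ord (s, P)) b \<le> 0}"
proof -
  let ?d = "mps_delta n p D imp ord s" and ?\<rho> = "mps_rate n p D imp ord s"
  have "?\<rho> b = 0" if "b \<in> all_items p D" "s b \<le> 0" for b
    using mps_rate_pos_imp_pos[OF assms that(1)] mps_rate_nonneg that(2) by (meson less_le not_le)
  moreover obtain b where "b \<in> all_items p D" "0 < ?\<rho> b" "s b = ?d * ?\<rho> b"
    using mps_delta_attained[OF assms] by blast
  moreover have "0 < s b" using mps_rate_pos_imp_pos[OF assms] calculation(2,3) .
  ultimately show ?thesis by (fastforce simp: mps_step_simp[OF assms])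
qed

lemma mps_run_exhausted: "mps_avail p D (fst (mps_run n p D imp ord (card (all_items p D)))) = {}"
proof -
  define g :: "'a mps_state \<Rightarrow> 'a set"
    where "g = (\<lambda>\<sigma>. {b \<in> all_items p D. fst \<sigma> b \<le> 0})"
  have growing: "g \<sigma> \<subset> g (mps_step n p D imp ord \<sigma>)" if "mps_avail p D (fst \<sigma>) \<noteq> {}" for \<sigma>
    using mps_step_exhausts[OF that, of "snd \<sigma>"] by (simp add: g_def)
  have strict: "g \<sigma> \<subset> g (mps_step n p D imp ord \<sigma>)" if "mps_step n p D imp ord \<sigma> \<noteq> \<sigma>" for \<sigma>
  proof (rule growing)
    show "mps_avail p D (fst \<sigma>) \<noteq> {}" using that by (auto simp: mps_step_def)
  qed
  have "g \<sigma> \<subseteq> all_items p D" for \<sigma> by (auto simp: g_def)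
  then have "mps_step n p D imp ord (mps_run n p D imp ord (card (all_items p D)))
      = mps_run n p D imp ord (card (all_items p D))"
    unfolding mps_run_def using strict by (rule funpow_card_fixpoint[OF finite_all_items])
  then show ?thesis using growing by fastforce
qed

text \<open>Single-type PS on \<open>D i\<close> never touches the other items, whose supply stays \<open>1\<close>.\<close>
definition type_supply :: "nat \<Rightarrow> ('a \<Rightarrow> real) \<Rightarrow> 'a \<Rightarrow> real" where
  "type_supply i s = (\<lambda>b. if b \<in> D i then s b else 1)"

definition type_state ::
  "nat \<Rightarrow> real \<Rightarrow> ('a \<Rightarrow> real) \<Rightarrow> (nat \<Rightarrow> (nat \<Rightarrow> 'a) \<Rightarrow> real) \<Rightarrow> 'a ps_state" where
  "type_state i T s P = (T, type_supply i s, marginal p D P i)"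

lemma ps_avail_type_supply: "ps_avail (D i) (type_supply i s) = ps_avail (D i) s"
  by (auto simp: ps_avail_def type_supply_def)

lemma finite_bundles: "finite (bundles p D)"
  unfolding bundles_def by (rule finite_PiE) (simp_all add: finite_type)

lemma marginal_eat_top_bundle:
  assumes "mps_avail p D s \<noteq> {}" "i < p"
  shows "marginal p D (\<lambda>j x. P j x + (if j < n \<and> x = top_bundle s j then d else 0)) i j b =
    marginal p D P i j b + (if j < n \<and> b = ps_top (D i) (type_profile i) s j then d else 0)"
proof -
  let ?B = "{x \<in> bundles p D. x i = b}"
  have "(\<Sum>x\<in>?B. if j < n \<and> x = top_bundle s j then d else 0) =
      (if j < n \<and> b = ps_top (D i) (type_profile i) s j then d else 0)"
  proof (cases "j < n")
    case True
    have "top_bundle s j \<in> bundles p D"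
      using top_bundle_avail[OF assms(1) True] by (simp add: mps_avail_def)
    then show ?thesis
      using True assms(2) finite_bundles by (simp add: sum.delta top_bundle_def)
  qed simp
  then show ?thesis by (simp add: marginal_def sum.distrib)
qed

lemma type_state_step:
  assumes "mps_avail p D s \<noteq> {}" "i < p"
  defines "d \<equiv> mps_delta n p D imp ord s"
  shows "type_state i (T + d) (fst (mps_step n p D imp ord (s, P))) (snd (mps_step n p D imp ord (s, P))) =
    ps_advance n (D i) (type_profile i) d (type_state i T s P)"
proof -
  interpret ps_setting n "D i" "type_profile i" using assms(2) by (rule type_ps_setting)
  have avail: "ps_avail (D i) s \<noteq> {}" using assms(1,2) by (simp add: mps_avail_nonempty_iff)
  have rate: "ps_rate n (D i) (type_profile i) (type_supply i s) = ps_rate n (D i) (type_profile i) s"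
    and top: "ps_top (D i) (type_profile i) (type_supply i s) = ps_top (D i) (type_profile i) s"
    by (rule ps_rate_cong[OF ps_avail_type_supply], rule ps_top_cong[OF ps_avail_type_supply])
  have "type_supply i (\<lambda>b. s b - d * mps_rate n p D imp ord s b) b =
      type_supply i s b - d * ps_rate n (D i) (type_profile i) s b" for b
    using mps_rate_eq_ps_rate[OF assms(1,2)] ps_rate_eq_0[OF avail, of b]
    by (auto simp: type_supply_def ps_avail_def)
  then show ?thesis
    using marginal_eat_top_bundle[OF assms(1,2)]
    by (simp add: type_state_def mps_step_simp[OF assms(1)] ps_advance_simp rate top d_def fun_eq_iff)
qed

text \<open>All types are eaten at the same total rate \<open>n\<close>, so at time \<open>T\<close> each type has \<open>n (1 - T)\<close>
  units left, and every type runs out exactly at time \<open>1\<close>.\<close>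
definition mps_invariant :: "real \<Rightarrow> ('a \<Rightarrow> real) \<Rightarrow> (nat \<Rightarrow> (nat \<Rightarrow> 'a) \<Rightarrow> real) \<Rightarrow> bool" where
  "mps_invariant T s P \<longleftrightarrow> (\<forall>b\<in>all_items p D. 0 \<le> s b) \<and>
     (\<forall>i<p. (\<Sum>b\<in>D i. s b) = real n * (1 - T)) \<and>
     (\<forall>i<p. ps_on_path n (D i) (type_profile i) (type_state i T s P))"

lemma mps_invariant_init: "mps_invariant 0 (\<lambda>_. 1) (\<lambda>_ _. 0)"
proof -
  have "marginal p D (\<lambda>_ _. 0) i = (\<lambda>_ _. 0)" for i by (simp add: marginal_def fun_eq_iff)
  then show ?thesis
    by (simp add: mps_invariant_def type_state_def type_supply_def card_type ps_on_path_init)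
qed

lemma mps_delta_le_remaining_time:
  assumes "mps_invariant T s P" "mps_avail p D s \<noteq> {}"
  shows "mps_delta n p D imp ord s \<le> 1 - T"
proof -
  let ?d = "mps_delta n p D imp ord s"
  have "(\<Sum>b\<in>D 0. ?d * mps_rate n p D imp ord s b) \<le> (\<Sum>b\<in>D 0. s b)"
    using assms(1) types_nonempty
    by (intro sum_mono mps_delta_feasible) (auto simp: mps_invariant_def all_items_iff)
  then have "?d * real n \<le> real n * (1 - T)"
    using assms types_nonempty by (simp add: mps_invariant_def mps_rate_sum flip: sum_distrib_left)
  then show ?thesis using agents_nonempty by (simp add: mult.commute)
qed

lemma type_state_step_on_path:
  assumes inv: "mps_invariant T s P" and avail: "mps_avail p D s \<noteq> {}" and "i < p"
  defines "d \<equiv> mps_delta n p D imp ord s"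
  shows "ps_on_path n (D i) (type_profile i)
    (type_state i (T + d) (fst (mps_step n p D imp ord (s, P))) (snd (mps_step n p D imp ord (s, P))))"
proof -
  have path: "ps_on_path n (D i) (type_profile i) (T, type_supply i s, marginal p D P i)"
    using inv \<open>i < p\<close> by (simp add: mps_invariant_def type_state_def)
  have "0 < d" unfolding d_def using avail by (rule mps_delta_pos)
  have "d \<le> 1 - T" unfolding d_def using inv avail by (rule mps_delta_le_remaining_time)
  have "ps_avail (D i) (type_supply i s) \<noteq> {}"
    using avail \<open>i < p\<close> by (simp add: ps_avail_type_supply mps_avail_nonempty_iff)
  have "d * ps_rate n (D i) (type_profile i) (type_supply i s) b \<le> type_supply i s b"
    if "b \<in> D i" for b
    using mps_delta_feasible[of s b] inv mps_rate_eq_ps_rate[OF avail \<open>i < p\<close> that] that \<open>i < p\<close>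
      ps_rate_cong[OF ps_avail_type_supply, of n i "type_profile i" s]
    by (auto simp: d_def type_supply_def all_items_iff mps_invariant_def)
  then have "ps_on_path n (D i) (type_profile i)
      (ps_advance n (D i) (type_profile i) d (T, type_supply i s, marginal p D P i))"
    using \<open>0 < d\<close> ps_setting.ps_on_path_advance[OF type_ps_setting[OF \<open>i < p\<close>] path
        \<open>ps_avail (D i) (type_supply i s) \<noteq> {}\<close> _ \<open>d \<le> 1 - T\<close>]
    by simp
  moreover have "type_state i (T + d) (fst (mps_step n p D imp ord (s, P)))
      (snd (mps_step n p D imp ord (s, P))) =
    ps_advance n (D i) (type_profile i) d (T, type_supply i s, marginal p D P i)"
    using type_state_step[OF avail \<open>i < p\<close>] by (simp add: d_def type_state_def)
  ultimately show ?thesis by simp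
qed

lemma mps_invariant_step:
  assumes inv: "mps_invariant T s P" and avail: "mps_avail p D s \<noteq> {}"
  defines "d \<equiv> mps_delta n p D imp ord s"
  shows "mps_invariant (T + d) (fst (mps_step n p D imp ord (s, P))) (snd (mps_step n p D imp ord (s, P)))"
proof -
  have nonneg: "\<forall>b\<in>all_items p D. 0 \<le> s b"
    and sums: "\<And>i. i < p \<Longrightarrow> (\<Sum>b\<in>D i. s b) = real n * (1 - T)"
    using inv by (auto simp: mps_invariant_def)
  have "(\<Sum>b\<in>D i. s b - d * mps_rate n p D imp ord s b) = real n * (1 - (T + d))" if "i < p" for i
    using sums[OF that] mps_rate_sum[OF avail that]
    by (simp add: sum_subtractf algebra_simps flip: sum_distrib_left)
  moreover have "d * mps_rate n p D imp ord s b \<le> s b" if "b \<in> all_items p D" for b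
    unfolding d_def using nonneg that by (rule mps_delta_feasible)
  ultimately show ?thesis
    using type_state_step_on_path[OF inv avail]
    by (simp add: mps_invariant_def mps_step_simp[OF avail] d_def)
qed

lemma mps_run_invariant: "\<exists>T. mps_invariant T (fst (mps_run n p D imp ord k)) (snd (mps_run n p D imp ord k))"
proof (induction k)
  case 0
  show ?case using mps_invariant_init by (auto simp: mps_run_def)
next
  case (Suc k)
  then obtain T s P where run: "mps_run n p D imp ord k = (s, P)" and inv: "mps_invariant T s P"
    by (metis prod.collapse)
  have step: "mps_run n p D imp ord (Suc k) = mps_step n p D imp ord (s, P)"
    by (simp add: mps_run_def run[unfolded mps_run_def])
  show ?case
  proof (cases "mps_avail p D s = {}")
    case True
    then show ?thesis using inv step by (auto simp: mps_step_def)
  qed (use mps_invariant_step[OF inv] step in auto)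
qed

lemma marginal_MPS_eq_PS:
  assumes "i < p"
  shows "marginal p D (MPS n p D imp ord) i = PS n (D i) (type_profile i)"
proof -
  obtain s P where run: "mps_run n p D imp ord (card (all_items p D)) = (s, P)"
    by (cases "mps_run n p D imp ord (card (all_items p D))")
  obtain T where inv: "mps_invariant T s P"
    using mps_run_invariant[of "card (all_items p D)"] by (auto simp: run)
  have "mps_avail p D s = {}" using mps_run_exhausted by (simp add: run)
  then obtain i0 where i0: "i0 < p" "ps_avail (D i0) s = {}"
    using mps_avail_nonempty_iff[of s] by blast
  have "(\<Sum>b\<in>D i0. s b) = 0"
    using i0 inv by (intro sum.neutral) (force simp: ps_avail_def mps_invariant_def all_items_iff)
  then have "T = 1" using inv i0(1) agents_nonempty by (simp add: mps_invariant_def)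
  then have "ps_on_path n (D i) (type_profile i) (1, type_supply i s, marginal p D P i)"
    using inv assms by (simp add: mps_invariant_def type_state_def)
  then have "PS n (D i) (type_profile i) = marginal p D P i"
    by (rule ps_setting.PS_eq_if_on_path_at_1[OF type_ps_setting[OF assms]])
  then show ?thesis using run by (simp add: MPS_def mps_run_def)
qed

end

theorem claim1:
  fixes n p :: nat and D :: "nat \<Rightarrow> 'a set"
    and imp :: "nat \<Rightarrow> nat rel" and ord :: "nat \<Rightarrow> nat \<Rightarrow> 'a rel"
  assumes "lex_setting n p D imp ord"
  shows "\<forall>i<p. \<forall>j<n. \<forall>b\<in>D i.
           marginal p D (MPS n p D imp ord) i j b = PS n (D i) (\<lambda>j. ord j i) j b"
proof (intro allI impI ballI)
  fix i j b assume "i < p" "j < n"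
  then interpret mps_setting n p D imp ord
    using assms by unfold_locales auto
  show "marginal p D (MPS n p D imp ord) i j b = PS n (D i) (\<lambda>j. ord j i) j b"
    using marginal_MPS_eq_PS[OF \<open>i < p\<close>] by simp
qed

end
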